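(* For every statement $c$, $\mathit{synt\_step\_image\_closed}(\mathit{stmt\_to\_ta}\ c)$ holds.
   Context: Syntax. Values: $\mathit{val} ::= \mathit{Bool}\ b \mid \mathit{Null}$. Expressions: $\mathit{expr} ::= \mathit{Val}\ v \mid \mathit{Var}\ x$. Statements: $\mathit{stmt} ::= \mathit{Empty} \mid \mathit{Assign}\ x\ v \mid \mathit{Seq}\ c_1\ c_2 \mid \mathit{Cond}\ e\ c_1\ c_2 \mid \mathit{While}\ e\ c$. Statement paths: $\mathit{stmt\_path} ::= \mathit{PTop} \mid \mathit{PSeqLeft}\ sp\ c_2 \mid \mathit{PSeqRight}\ c_1\ sp \mid \mathit{PCondLeft}\ e\ sp\ c_2 \mid \mathit{PCondRight}\ e\ c_1\ sp \mid \mathit{PWhile}\ e\ sp$. A location is $\mathit{Loc}\ c\ sp$; a syntactic configuration is a pair (location, Boolean). $\mathit{all\_locations}\ c\ sp$: contains $\mathit{Loc}\ c\ sp$, plus for $c=\mathit{Seq}\ c_1\ c_2$ the elements of $\mathit{all\_locations}\ c_1\ (\mathit{PSeqLeft}\ sp\ c_2)$ and $\mathit{all\_locations}\ c_2\ (\mathit{PSeqRight}\ c_1\ sp)$; for $c=\mathit{Cond}\ e\ c_1\ c_2$ those of $\mathit{all\_locations}\ c_1\ (\mathit{PCondLeft}\ e\ sp\ c_2)$ and $\mathit{all\_locations}\ c_2\ (\mathit{PCondRight}\ e\ c_1\ sp)$; for $c=\mathit{While}\ e\ c'$ those of $\mathit{all\_locations}\ c'\ (\mathit{PWhile}\ e\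 sp)$; nothing else. $\mathit{nodes\_of\_stmt\_locations}$ maps a list of locations to the list of syntactic configurations $(l,\mathit{True})$ and $(l,\mathit{False})$ for all $l$ in it. Next location: $\mathit{next\_loc}\ c\ \mathit{PTop} = (\mathit{Loc}\ c\ \mathit{PTop}, \mathit{False})$; $\mathit{next\_loc}\ c\ (\mathit{PSeqLeft}\ sp\ c_2) = (\mathit{Loc}\ c_2\ (\mathit{PSeqRight}\ c\ sp), \mathit{True})$; $\mathit{next\_loc}\ c\ (\mathit{PSeqRight}\ c_1\ sp) = (\mathit{Loc}\ (\mathit{Seq}\ c_1\ c)\ sp, \mathit{False})$; $\mathit{next\_loc}\ c\ (\mathit{PCondLeft}\ e\ sp\ c_2) = (\mathit{Loc}\ (\mathit{Cond}\ e\ c\ c_2)\ sp, \mathit{False})$; $\mathit{next\_loc}\ c\ (\mathit{PCondRight}\ e\ c_1\ sp) = (\mathit{Loc}\ (\mathit{Cond}\ e\ c_1\ c)\ sp, \mathit{False})$; $\mathit{next\_loc}\ c\ (\mathit{PWhile}\ e\ sp) = (\mathit{Loc}\ (\mathit{While}\ e\ c)\ sp, \mathit{True})$. $\mathit{synt\_step\_image}$: $(\mathit{Loc}\ \mathit{Empty}\ sp,\mathit{True})\mapsto[(\mathit{Loc}\ \mathit{Empty}\ sp,\mathit{False})]$; $(\mathit{Loc}\ (\mathit{Assign}\ x\ v)\ sp,\mathit{True})\mapsto[(\mathit{Loc}\ (\mathit{Assign}\ x\ v)\ sp,\mathit{False})]$; $(\mathit{Loc}\ (\mathit{Seq}\ c_1\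 c_2)\ sp,\mathit{True})\mapsto[(\mathit{Loc}\ c_1\ (\mathit{PSeqLeft}\ sp\ c_2),\mathit{True})]$; $(\mathit{Loc}\ (\mathit{Cond}\ e\ c_1\ c_2)\ sp,\mathit{True})\mapsto[(\mathit{Loc}\ c_1\ (\mathit{PCondLeft}\ e\ sp\ c_2),\mathit{True}),(\mathit{Loc}\ c_2\ (\mathit{PCondRight}\ e\ c_1\ sp),\mathit{True})]$; $(\mathit{Loc}\ (\mathit{While}\ e\ c)\ sp,\mathit{True})\mapsto[(\mathit{Loc}\ c\ (\mathit{PWhile}\ e\ sp),\mathit{True}),(\mathit{Loc}\ (\mathit{While}\ e\ c)\ sp,\mathit{False})]$; $(\mathit{Loc}\ c\ sp,\mathit{False})\mapsto[\,]$ if $sp=\mathit{PTop}$, else $[\mathit{next\_loc}\ c\ sp]$. Automata: actions are $\mathit{NoAct}$ and $\mathit{AssAct}\ x\ v$; an edge is a record $(\mathit{source},\mathit{action},\mathit{dest})$; an automaton is a record with a node list $\mathit{nodes}$, an edge list $\mathit{edges}$ and an initial node $\mathit{init\_s}$. $\mathit{action\_of\_synt\_config}(\mathit{Loc}\ (\mathit{Assign}\ x\ v)\ sp,\mathit{True})=\mathit{AssAct}\ x\ v$, and $\mathit{NoAct}$ otherwise. For a node $n$, $\mathit{edge\_of\_synt\_config}\ n$ is the list of edges $(\mathit{source}=n,\mathit{action}=\mathit{action\_of\_synt\_config}\ n,\mathit{dest}=t)$ for $t\in\mathit{synt\_step\_image}\ n$; $\mathit{edges\_of\_nodes}\ nds$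 is the concatenation of $\mathit{edge\_of\_synt\_config}\ n$ over $n\in nds$. $\mathit{stmt\_to\_ta}\ c$ is the automaton with $\mathit{nodes}=nds:=\mathit{nodes\_of\_stmt\_locations}(\mathit{all\_locations}\ c\ \mathit{PTop})$, $\mathit{edges}=\mathit{edges\_of\_nodes}\ nds$, $\mathit{init\_s}=(\mathit{Loc}\ c\ \mathit{PTop},\mathit{True})$. $\mathit{synt\_step\_image\_closed}(\mathit{aut})$ means: for every node $n\in\mathit{nodes}(\mathit{aut})$ and every $t\in\mathit{synt\_step\_image}\ n$, both $t\in\mathit{nodes}(\mathit{aut})$ and the edge $(\mathit{source}=n,\mathit{action}=\mathit{action\_of\_synt\_config}\ n,\mathit{dest}=t)\in\mathit{edges}(\mathit{aut})$. *)

theory Defs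
  imports Main
begin

type_synonym var = string

datatype val = Bool bool | Null

datatype expr = Val val | Var var

datatype stmt = Empty | Assign var val | Seq stmt stmt | Cond expr stmt stmt | While expr stmt

datatype stmt_path = PTop | PSeqLeft stmt_path stmt | PSeqRight stmt stmt_path
  | PCondLeft expr stmt_path stmt | PCondRight expr stmt stmt_path | PWhile expr stmt_path

datatype location = Loc stmt stmt_path

type_synonym synt_config = "location \<times> bool"

fun all_locations :: "stmt \<Rightarrow> stmt_path \<Rightarrow> location list" where
  "all_locations (Seq c1 c2) sp = Loc (Seq c1 c2) sp #
     (all_locations c1 (PSeqLeft sp c2) @ all_locations c2 (PSeqRight c1 sp))"
| "all_locations (Cond e c1 c2) sp = Loc (Cond e c1 c2) sp #
     (all_locations c1 (PCondLeft e sp c2) @ all_locations c2 (PCondRight e c1 sp))"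
| "all_locations (While e c) sp = Loc (While e c) sp # all_locations c (PWhile e sp)"
| "all_locations c sp = [Loc c sp]"

definition nodes_of_stmt_locations :: "location list \<Rightarrow> synt_config list" where
  "nodes_of_stmt_locations ls = concat (map (\<lambda>l. [(l, True), (l, False)]) ls)"

fun next_loc :: "stmt \<Rightarrow> stmt_path \<Rightarrow> synt_config" where
  "next_loc c PTop = (Loc c PTop, False)"
| "next_loc c (PSeqLeft sp c2) = (Loc c2 (PSeqRight c sp), True)"
| "next_loc c (PSeqRight c1 sp) = (Loc (Seq c1 c) sp, False)"
| "next_loc c (PCondLeft e sp c2) = (Loc (Cond e c c2) sp, False)"
| "next_loc c (PCondRight e c1 sp) = (Loc (Cond e c1 c) sp, False)"
| "next_loc c (PWhile e sp) = (Loc (While e c) sp, True)"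

fun synt_step_image :: "synt_config \<Rightarrow> synt_config list" where
  "synt_step_image (Loc Empty sp, True) = [(Loc Empty sp, False)]"
| "synt_step_image (Loc (Assign x v) sp, True) = [(Loc (Assign x v) sp, False)]"
| "synt_step_image (Loc (Seq c1 c2) sp, True) = [(Loc c1 (PSeqLeft sp c2), True)]"
| "synt_step_image (Loc (Cond e c1 c2) sp, True) =
     [(Loc c1 (PCondLeft e sp c2), True), (Loc c2 (PCondRight e c1 sp), True)]"
| "synt_step_image (Loc (While e c) sp, True) =
     [(Loc c (PWhile e sp), True), (Loc (While e c) sp, False)]"
| "synt_step_image (Loc c sp, False) = (if sp = PTop then [] else [next_loc c sp])"

datatype action = NoAct | AssAct var val

record ('n, 'a) edge =
  source :: 'n
  action :: 'a
  dest :: 'n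

record ('n, 'a) automaton =
  nodes :: "'n list"
  edges :: "('n, 'a) edge list"
  init_s :: 'n

fun action_of_synt_config :: "synt_config \<Rightarrow> action" where
  "action_of_synt_config (Loc (Assign x v) sp, True) = AssAct x v"
| "action_of_synt_config _ = NoAct"

definition edge_of_synt_config :: "synt_config \<Rightarrow> (synt_config, action) edge list" where
  "edge_of_synt_config n =
     map (\<lambda>t. \<lparr>source = n, action = action_of_synt_config n, dest = t\<rparr>) (synt_step_image n)"

definition edges_of_nodes :: "synt_config list \<Rightarrow> (synt_config, action) edge list" where
  "edges_of_nodes nds = concat (map edge_of_synt_config nds)"

definition stmt_to_ta :: "stmt \<Rightarrow> (synt_config, action) automaton" where
  "stmt_to_ta c = (let nds = nodes_of_stmt_locations (all_locations c PTop) in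
     \<lparr>nodes = nds, edges = edges_of_nodes nds, init_s = (Loc c PTop, True)\<rparr>)"

definition synt_step_image_closed :: "(synt_config, action) automaton \<Rightarrow> bool" where
  "synt_step_image_closed aut \<longleftrightarrow>
     (\<forall>n \<in> set (nodes aut). \<forall>t \<in> set (synt_step_image n).
        t \<in> set (nodes aut) \<and>
        \<lparr>source = n, action = action_of_synt_config n, dest = t\<rparr> \<in> set (edges aut))"

end

theory Submission
  imports Defs
begin

text \<open>A location is a zipper: the statement in focus together with its surrounding context.
  Plugging the focus back into the context recovers the whole program. The locations of \<open>c\<close>
  are exactly those that plug back to \<open>c\<close>, and every syntactic step keeps the plugged program
  unchanged, so it never leaves the node set; the edges are generated from all nodes.\<close>

fun plug :: "stmt \<Rightarrow> stmt_path \<Rightarrow> stmt" where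
  "plug c PTop = c"
| "plug c (PSeqLeft sp c2) = plug (Seq c c2) sp"
| "plug c (PSeqRight c1 sp) = plug (Seq c1 c) sp"
| "plug c (PCondLeft e sp c2) = plug (Cond e c c2) sp"
| "plug c (PCondRight e c1 sp) = plug (Cond e c1 c) sp"
| "plug c (PWhile e sp) = plug (While e c) sp"

lemma Loc_in_all_locations: "Loc c sp \<in> set (all_locations c sp)"
  by (cases c) auto

lemma plug_eq_if_in_all_locations:
  "Loc c' sp' \<in> set (all_locations c sp) \<Longrightarrow> plug c' sp' = plug c sp"
  by (induction c sp rule: all_locations.induct) auto

lemma all_locations_subset:
  "Loc c' sp' \<in> set (all_locations c sp) \<Longrightarrow>
   set (all_locations c' sp') \<subseteq> set (all_locations c sp)"
  by (induction c sp rule: all_locations.induct) auto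

lemma in_all_locations_plug: "Loc c sp \<in> set (all_locations (plug c sp) PTop)"
proof (induction sp arbitrary: c)
  case PTop
  show ?case by (simp add: Loc_in_all_locations)
next
  case (PSeqLeft sp c2)
  show ?case
    using all_locations_subset[OF PSeqLeft.IH[of "Seq c c2"]] by (auto simp: Loc_in_all_locations)
next
  case (PSeqRight c1 sp)
  show ?case
    using all_locations_subset[OF PSeqRight.IH[of "Seq c1 c"]] by (auto simp: Loc_in_all_locations)
next
  case (PCondLeft e sp c2)
  show ?case
    using all_locations_subset[OF PCondLeft.IH[of "Cond e c c2"]]
    by (auto simp: Loc_in_all_locations)
next
  case (PCondRight e c1 sp)
  show ?case
    using all_locations_subset[OF PCondRight.IH[of "Cond e c1 c"]]
    by (auto simp: Loc_in_all_locations)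
next
  case (PWhile e sp)
  show ?case
    using all_locations_subset[OF PWhile.IH[of "While e c"]] by (auto simp: Loc_in_all_locations)
qed

lemma in_all_locations_PTop_iff:
  "Loc c' sp' \<in> set (all_locations c PTop) \<longleftrightarrow> plug c' sp' = c"
  using plug_eq_if_in_all_locations[of c' sp' c PTop] in_all_locations_plug by auto

lemma in_nodes_of_stmt_locations_iff:
  "(l, b) \<in> set (nodes_of_stmt_locations ls) \<longleftrightarrow> l \<in> set ls"
  unfolding nodes_of_stmt_locations_def by (cases b) auto

lemma plug_next_loc: "next_loc c sp = (Loc c' sp', b) \<Longrightarrow> plug c' sp' = plug c sp"
  by (cases sp) auto

lemma plug_synt_step_image:
  "(Loc c' sp', b') \<in> set (synt_step_image (Loc c sp, b)) \<Longrightarrow> plug c' sp' = plug c sp"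
  by (cases b; cases c) (auto split: if_splits intro: plug_next_loc[OF sym])

lemma edge_in_edges_of_nodes:
  "n \<in> set nds \<Longrightarrow> t \<in> set (synt_step_image n) \<Longrightarrow>
   \<lparr>source = n, action = action_of_synt_config n, dest = t\<rparr> \<in> set (edges_of_nodes nds)"
  unfolding edges_of_nodes_def edge_of_synt_config_def by force

lemma stmt_to_ta_simps:
  "nodes (stmt_to_ta c) = nodes_of_stmt_locations (all_locations c PTop)"
  "edges (stmt_to_ta c) = edges_of_nodes (nodes_of_stmt_locations (all_locations c PTop))"
  by (simp_all add: stmt_to_ta_def Let_def)

theorem lemma3:
  shows "synt_step_image_closed (stmt_to_ta c)"
  unfolding synt_step_image_closed_def
proof (intro ballI conjI)
  let ?N = "nodes_of_stmt_locations (all_locations c PTop)"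
  fix n t
  assume "n \<in> set (nodes (stmt_to_ta c))" and step: "t \<in> set (synt_step_image n)"
  then have n: "n \<in> set ?N"
    by (simp add: stmt_to_ta_simps)
  obtain c1 sp1 b1 c' sp' b' where n_eq: "n = (Loc c1 sp1, b1)" and t_eq: "t = (Loc c' sp', b')"
    by (metis location.exhaust prod.exhaust)
  have "plug c1 sp1 = c"
    using n unfolding n_eq in_nodes_of_stmt_locations_iff in_all_locations_PTop_iff .
  moreover have "plug c' sp' = plug c1 sp1"
    using step unfolding n_eq t_eq by (rule plug_synt_step_image)
  ultimately show "t \<in> set (nodes (stmt_to_ta c))"
    unfolding t_eq stmt_to_ta_simps in_nodes_of_stmt_locations_iff in_all_locations_PTop_iff
    by simp
  show "\<lparr>source = n, action = action_of_synt_config n, dest = t\<rparr> \<in> set (edges (stmt_to_ta c))"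
    using edge_in_edges_of_nodes[OF n step] by (simp add: stmt_to_ta_simps)
qed

end
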